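(* Let $P,Q\in\mathcal{PP}(n)$ with $P\preceq Q$, and let $(i,j)\in E(P)$ be such that $E(Q)=E(P)\setminus\{(i,j)\}$. Then $i,j$ are two consecutive letters in the word representing $\Psi_n^{-1}(P)$, and the word representing $\Psi_n^{-1}(Q)$ is obtained from that of $\Psi_n^{-1}(P)$ by permuting these two consecutive letters $ij$.
   Context: A plane poset is a finite set with two partial orders $\leq_h,\leq_r$ such that two distinct elements are $\leq_h$-comparable iff they are not $\leq_r$-comparable; $\mathcal{PP}(n)$ is the set of isomorphism classes of plane posets with $n$ elements. On a plane poset, $x\leq y$ iff ($x\leq_h y$ or $x\leq_r y$) is a total order (known fact); each $P\in\mathcal{PP}(n)$ is identified with $\{1,\ldots,n\}$ as a totally ordered set. For $\sigma\in\mathfrak{S}_n$, represented by the word $\sigma(1)\cdots\sigma(n)$, $\Psi_n(\sigma)$ is the plane poset on $\{1,\ldots,n\}$ with $a\leq_h b$ iff ($a\leq b$ and $\sigma^{-1}(a)\leq\sigma^{-1}(b)$) and $a\leq_r b$ iff ($a\leq b$ and $\sigma^{-1}(a)\geq\sigma^{-1}(b)$); it is known that $\Psi_n:\mathfrak{S}_n\to\mathcal{PP}(n)$ is a bijection. For $P\in\mathcal{PP}(n)$, $E(P)=\{(a,b)\mid a<_h b\text{ in }P\}$; $P\preceq Q$ means there exists $(i,j)\in E(P)$ with $E(Q)=E(P)\setminus\{(i,j)\}$. *)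

theory Defs
  imports "HOL-Combinatorics.Permutations"
begin

text \<open>A plane poset on {1..n} is represented by the pair of its two orders
  (le_h, le_r) as sets of pairs.\<close>
type_synonym plane_poset = "(nat \<times> nat) set \<times> (nat \<times> nat) set"

definition Psi :: "nat \<Rightarrow> (nat \<Rightarrow> nat) \<Rightarrow> plane_poset" where
  "Psi n \<sigma> =
    ({(a, b). a \<in> {1..n} \<and> b \<in> {1..n} \<and> a \<le> b \<and> inv \<sigma> a \<le> inv \<sigma> b},
     {(a, b). a \<in> {1..n} \<and> b \<in> {1..n} \<and> a \<le> b \<and> inv \<sigma> a \<ge> inv \<sigma> b})"

definition E :: "plane_poset \<Rightarrow> (nat \<times> nat) set" where
  "E P = {(a, b). (a, b) \<in> fst P \<and> a \<noteq> b}"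

text \<open>The word sigma(1) ... sigma(n) (list index k corresponds to position k+1).\<close>
definition word :: "nat \<Rightarrow> (nat \<Rightarrow> nat) \<Rightarrow> nat list" where
  "word n \<sigma> = map \<sigma> [1..<n+1]"

end

theory Submission
  imports Defs
begin

text \<open>The horizontal edges of \<open>\<Psi>\<^sub>n(\<sigma>)\<close> are exactly the non-inversions of \<open>\<sigma>\<close>,
  and \<open>\<sigma>\<close> is determined by them, since they fix the relative order of any two letters
  in the word of \<open>\<sigma>\<close>. If deleting one edge \<open>(i, j)\<close> again gives the edge set of a
  permutation \<open>\<tau>\<close>, then \<open>i\<close> and \<open>j\<close> are the only pair whose order differs in the words
  of \<open>\<sigma>\<close> and \<open>\<tau>\<close>; a letter strictly between them in the word of \<open>\<sigma>\<close> would keep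
  its order relative to both and so block the swap. Hence \<open>i, j\<close> are adjacent, swapping
  them deletes exactly the edge \<open>(i, j)\<close>, and \<open>\<tau>\<close> is this swap.\<close>

lemma E_Psi_iff:
  assumes "\<sigma> permutes {1..n}"
  shows "(a, b) \<in> E (Psi n \<sigma>) \<longleftrightarrow>
    a \<in> {1..n} \<and> b \<in> {1..n} \<and> a < b \<and> inv \<sigma> a < inv \<sigma> b"
proof -
  have "inj (inv \<sigma>)" using permutes_inv[OF assms] permutes_inj by blast
  then show ?thesis unfolding E_def Psi_def
    by (auto simp: inj_eq) (metis injD order_le_neq_trans)
qed

lemma inv_less_iff_E_Psi:
  assumes "\<sigma> permutes {1..n}" "a \<in> {1..n}" "b \<in> {1..n}" "a \<noteq> b"
  shows "inv \<sigma> a < inv \<sigma> b \<longleftrightarrow>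
    a < b \<and> (a, b) \<in> E (Psi n \<sigma>) \<or> b < a \<and> (b, a) \<notin> E (Psi n \<sigma>)"
proof -
  have "inv \<sigma> a \<noteq> inv \<sigma> b"
    using assms(4) permutes_inj[OF permutes_inv[OF assms(1)]] by (auto dest: injD)
  then show ?thesis using assms(2-4) by (simp add: E_Psi_iff[OF assms(1)]) linarith
qed

lemma permutes_atLeastAtMost_eq_Suc_card:
  assumes "f permutes {1..n}" "a \<in> {1..n}"
  shows "f a = Suc (card {b \<in> {1..n}. f b < f a})"
proof -
  have fa: "f a \<in> {1..n}" using permutes_in_image[OF assms(1)] assms(2) by simp
  have "f ` {b \<in> {1..n}. f b < f a} = {y \<in> f ` {1..n}. y < f a}" by auto
  also have "\<dots> = {1..<f a}" using permutes_image[OF assms(1)] fa by auto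
  finally have "card {b \<in> {1..n}. f b < f a} = card {1..<f a}"
    by (metis card_image inj_on_subset permutes_inj[OF assms(1)] subset_UNIV)
  then show ?thesis using fa by simp
qed

lemma permutes_eq_if_E_Psi_eq:
  assumes "\<sigma> permutes {1..n}" "\<tau> permutes {1..n}" "E (Psi n \<sigma>) = E (Psi n \<tau>)"
  shows "\<sigma> = \<tau>"
proof -
  have "inv \<sigma> a = inv \<tau> a" for a
  proof (cases "a \<in> {1..n}")
    case True
    have "inv \<sigma> b < inv \<sigma> a \<longleftrightarrow> inv \<tau> b < inv \<tau> a" if "b \<in> {1..n}" for b
      using inv_less_iff_E_Psi[OF assms(1) that True] inv_less_iff_E_Psi[OF assms(2) that True]
        assms(3) by (cases "a = b") auto
    then have "{b \<in> {1..n}. inv \<sigma> b < inv \<sigma> a} = {b \<in> {1..n}. inv \<tau> b < inv \<tau> a}"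
      by blast
    then show ?thesis
      using permutes_atLeastAtMost_eq_Suc_card[OF permutes_inv[OF assms(1)] True]
        permutes_atLeastAtMost_eq_Suc_card[OF permutes_inv[OF assms(2)] True] by simp
  next
    case False
    then show ?thesis
      using permutes_not_in[OF permutes_inv[OF assms(1)]] permutes_not_in[OF permutes_inv[OF assms(2)]]
      by simp
  qed
  then have "inv \<sigma> = inv \<tau>" by auto
  then show ?thesis using permutes_inv_inv[OF assms(1)] permutes_inv_inv[OF assms(2)] by metis
qed

lemma inv_Suc_if_E_Psi_remove:
  assumes \<sigma>: "\<sigma> permutes {1..n}" and \<tau>: "\<tau> permutes {1..n}"
    and ij: "(i, j) \<in> E (Psi n \<sigma>)" and remove: "E (Psi n \<tau>) = E (Psi n \<sigma>) - {(i, j)}"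
  shows "inv \<sigma> j = Suc (inv \<sigma> i)"
proof (rule ccontr)
  assume gap: "inv \<sigma> j \<noteq> Suc (inv \<sigma> i)"
  have ij_props: "i \<in> {1..n}" "j \<in> {1..n}" "i < j" "inv \<sigma> i < inv \<sigma> j"
    using ij E_Psi_iff[OF \<sigma>] by auto
  have order_kept: "inv \<tau> a < inv \<tau> b \<longleftrightarrow> inv \<sigma> a < inv \<sigma> b"
    if "a \<in> {1..n}" "b \<in> {1..n}" "a \<noteq> b" "{a, b} \<noteq> {i, j}" for a b
    using inv_less_iff_E_Psi[OF \<sigma> that(1-3)] inv_less_iff_E_Psi[OF \<tau> that(1-3)] remove that(4)
    by auto
  have swapped: "inv \<tau> j < inv \<tau> i"
    using inv_less_iff_E_Psi[OF \<tau> ij_props(2,1)] ij_props(3) remove by auto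
  define m where "m = \<sigma> (Suc (inv \<sigma> i))"
  have between: "inv \<sigma> i < inv \<sigma> m" "inv \<sigma> m < inv \<sigma> j"
    using gap ij_props(4) permutes_inverses(2)[OF \<sigma>] by (auto simp: m_def)
  have "inv \<sigma> j \<in> {1..n}" using permutes_in_image[OF permutes_inv[OF \<sigma>]] ij_props(2) by simp
  then have "m \<in> {1..n}"
    using between permutes_in_image[OF \<sigma>] by (auto simp: m_def permutes_inverses(2)[OF \<sigma>])
  moreover have "m \<noteq> i" "m \<noteq> j" using between by auto
  ultimately have "inv \<tau> i < inv \<tau> m" "inv \<tau> m < inv \<tau> j"
    using order_kept[of i m] order_kept[of m j] between ij_props by (auto simp: doubleton_eq_iff)
  with swapped show False by simp
qed

lemma transpose_Suc_less_iff:
  "transpose p (Suc p) x < transpose p (Suc p) y \<longleftrightarrow>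
    x < y \<and> \<not> (x = p \<and> y = Suc p) \<or> x = Suc p \<and> y = p"
  unfolding transpose_def by auto

lemma permutes_comp_transpose:
  "\<sigma> permutes S \<Longrightarrow> p \<in> S \<Longrightarrow> q \<in> S \<Longrightarrow> \<sigma> \<circ> transpose p q permutes S"
  by (simp add: permutes_compose permutes_swap_id)

lemma E_Psi_comp_transpose:
  assumes \<sigma>: "\<sigma> permutes {1..n}" and "p \<in> {1..n}" "Suc p \<in> {1..n}"
    and letters: "\<sigma> p = i" "\<sigma> (Suc p) = j" and ascent: "i < j"
  shows "E (Psi n (\<sigma> \<circ> transpose p (Suc p))) = E (Psi n \<sigma>) - {(i, j)}"
proof -
  let ?t = "transpose p (Suc p)"
  have perm: "\<sigma> \<circ> ?t permutes {1..n}" using permutes_comp_transpose[OF \<sigma> assms(2,3)] .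
  have inv_comp: "inv (\<sigma> \<circ> ?t) = ?t \<circ> inv \<sigma>"
    by (metis o_inv_distrib permutes_bij[OF \<sigma>] bij_transpose inv_transpose_eq)
  have inv_eq: "inv \<sigma> a = p \<longleftrightarrow> a = i" "inv \<sigma> a = Suc p \<longleftrightarrow> a = j" for a
    using permutes_inverses[OF \<sigma>] letters by metis+
  show ?thesis
  proof (rule set_eqI, clarify)
    fix a b
    show "(a, b) \<in> E (Psi n (\<sigma> \<circ> ?t)) \<longleftrightarrow> (a, b) \<in> E (Psi n \<sigma>) - {(i, j)}"
      unfolding Diff_iff E_Psi_iff[OF perm] E_Psi_iff[OF \<sigma>] inv_comp comp_apply
        transpose_Suc_less_iff inv_eq[of a] inv_eq[of b]
      using ascent by auto
  qed
qed

lemma length_word: "length (word n \<sigma>) = n"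
  unfolding word_def by simp

lemma word_nth: "k < n \<Longrightarrow> word n \<sigma> ! k = \<sigma> (Suc k)"
  unfolding word_def by (simp del: upt_Suc)

lemma word_comp_transpose:
  assumes "Suc k < n"
  shows "word n (\<sigma> \<circ> transpose (Suc k) (Suc (Suc k))) =
    (word n \<sigma>)[k := \<sigma> (Suc (Suc k)), Suc k := \<sigma> (Suc k)]"
  using assms by (intro nth_equalityI) (auto simp: length_word word_nth nth_list_update transpose_def)

theorem lemma14:
  fixes n :: nat and \<sigma> \<tau> :: "nat \<Rightarrow> nat" and i j :: nat
  assumes "\<sigma> permutes {1..n}" and "\<tau> permutes {1..n}"
    and "(i, j) \<in> E (Psi n \<sigma>)"
    and "E (Psi n \<tau>) = E (Psi n \<sigma>) - {(i, j)}"
  shows "\<exists>k. Suc k < n \<and> word n \<sigma> ! k = i \<and> word n \<sigma> ! Suc k = j \<and>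
           word n \<tau> = (word n \<sigma>)[k := j, Suc k := i]"
proof -
  have ij: "i \<in> {1..n}" "j \<in> {1..n}" "i < j" using assms(3) E_Psi_iff[OF assms(1)] by auto
  define p where "p = inv \<sigma> i"
  have adjacent: "inv \<sigma> j = Suc p" using inv_Suc_if_E_Psi_remove[OF assms] by (simp add: p_def)
  have letters: "\<sigma> p = i" "\<sigma> (Suc p) = j"
    using permutes_inverses(1)[OF assms(1), of i] permutes_inverses(1)[OF assms(1), of j] adjacent
    by (simp_all add: p_def)
  have positions: "p \<in> {1..n}" "Suc p \<in> {1..n}"
    using permutes_in_image[OF permutes_inv[OF assms(1)]] ij(1,2) adjacent by (metis p_def)+
  have "E (Psi n (\<sigma> \<circ> transpose p (Suc p))) = E (Psi n \<tau>)"
    using E_Psi_comp_transpose[OF assms(1) positions letters ij(3)] assms(4) by simp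
  then have \<tau>: "\<sigma> \<circ> transpose p (Suc p) = \<tau>"
    by (rule permutes_eq_if_E_Psi_eq[OF permutes_comp_transpose[OF assms(1) positions] assms(2)])
  obtain k where k: "p = Suc k" using positions by (cases p) auto
  show ?thesis
  proof (intro exI[of _ k] conjI)
    show "Suc k < n" using positions k by simp
    then show "word n \<sigma> ! k = i" "word n \<sigma> ! Suc k = j"
      using letters k by (simp_all add: word_nth)
    show "word n \<tau> = (word n \<sigma>)[k := j, Suc k := i]"
      using word_comp_transpose[OF \<open>Suc k < n\<close>, of \<sigma>] letters k by (simp add: \<tau>[symmetric])
  qed
qed

end
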